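(* Let $U,V\subset\mathcal{A}_0$ be compact sets such that $U^T$ and $V^T$ are complete. Then the following are equivalent: (a) $U^{**}=V^{**}$; (b) $U^T=V^T$; (c) $U^*=V^*$.
   Context: $D=\{z:|z|<1\}$, $\overline D$ its closure. $\mathcal{A}$ is the space of functions $f(z)=\sum_{k\ge0}a_k(f)z^k$ analytic in $D$, with the topology of locally uniform convergence; $\mathcal{A}_0=\{f\in\mathcal{A}: a_0(f)=1\}$. $\mathcal{A}(\overline D)$ is the set of functions analytic in some disk $\{|z|<R\}$ with $R>1$, and $\mathcal{A}_0(\overline D)=\{g\in\mathcal{A}(\overline D):a_0(g)=1\}$. The Hadamard product is $(f*g)(z)=\sum_{k\ge0}a_k(f)a_k(g)z^k$. For $V\subset\mathcal{A}_0$, $V^*=\{g\in\mathcal{A}_0:(f*g)(z)\ne0 \ \forall z\in D,\ \forall f\in V\}$, $V^{**}=(V^* )^*$, and $V^T=\{g\in\mathcal{A}_0(\overline D): (f*g)(1)\ne0 \ \forall f\in V\}$. For $x\in\overline D$, $(P_xf)(z)=f(xz)$; a set $W$ is complete if $P_xf\in W$ for all $f\in W$, $x\in\overline D$. *)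

theory Defs
  imports "HOL-Complex_Analysis.Complex_Analysis"
begin

text \<open>Functions are represented as maps complex => complex; only their values on the
relevant disk matter.  The disk D is ball 0 1, its closure cball 0 1.\<close>

definition calA :: "(complex \<Rightarrow> complex) set" where
  "calA = {f. f holomorphic_on ball 0 1}"

definition calA0 :: "(complex \<Rightarrow> complex) set" where
  "calA0 = {f \<in> calA. f 0 = 1}"

definition coeff_a :: "nat \<Rightarrow> (complex \<Rightarrow> complex) \<Rightarrow> complex" where
  "coeff_a k f = (deriv ^^ k) f 0 / of_nat (fact k)"

definition calA_cl :: "(complex \<Rightarrow> complex) set" where
  "calA_cl = {g. \<exists>R>1. g holomorphic_on ball 0 R}"

definition calA0_cl :: "(complex \<Rightarrow> complex) set" where
  "calA0_cl = {g \<in> calA_cl. g 0 = 1}"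

definition hadamard :: "(complex \<Rightarrow> complex) \<Rightarrow> (complex \<Rightarrow> complex) \<Rightarrow> complex \<Rightarrow> complex" where
  "hadamard f g = (\<lambda>z. \<Sum>k. coeff_a k f * coeff_a k g * z ^ k)"

definition dual :: "(complex \<Rightarrow> complex) set \<Rightarrow> (complex \<Rightarrow> complex) set" where
  "dual V = {g \<in> calA0. \<forall>f\<in>V. \<forall>z\<in>ball 0 1. hadamard f g z \<noteq> 0}"

definition dualT :: "(complex \<Rightarrow> complex) set \<Rightarrow> (complex \<Rightarrow> complex) set" where
  "dualT V = {g \<in> calA0_cl. \<forall>f\<in>V. hadamard f g 1 \<noteq> 0}"

definition Pop :: "complex \<Rightarrow> (complex \<Rightarrow> complex) \<Rightarrow> complex \<Rightarrow> complex" where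
  "Pop x f = (\<lambda>z. f (x * z))"

definition complete_set :: "(complex \<Rightarrow> complex) set \<Rightarrow> bool" where
  "complete_set W \<longleftrightarrow> (\<forall>f\<in>W. \<forall>x\<in>cball 0 1. Pop x f \<in> W)"

definition lu_converges :: "(nat \<Rightarrow> complex \<Rightarrow> complex) \<Rightarrow> (complex \<Rightarrow> complex) \<Rightarrow> bool" where
  "lu_converges F g \<longleftrightarrow>
     (\<forall>K. compact K \<and> K \<subseteq> ball 0 1 \<longrightarrow> uniform_limit K F g sequentially)"

text \<open>Compactness in the (metrizable) topology of locally uniform convergence on D,
expressed as sequential compactness.\<close>
definition lu_compact :: "(complex \<Rightarrow> complex) set \<Rightarrow> bool" where
  "lu_compact U \<longleftrightarrow>
     (\<forall>F::nat \<Rightarrow> complex \<Rightarrow> complex. (\<forall>n. F n \<in> U) \<longrightarrow>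
        (\<exists>(r::nat\<Rightarrow>nat) g. strict_mono r \<and> g \<in> U \<and> lu_converges (F \<circ> r) g))"

end

theory Submission
  imports Defs
begin

(* The equivalence of (a) and (c) holds for all subsets of calA0, because V*** = V*.
   Since (f * P_y g)(1) = (f * g)(y), a function g lies in U* exactly when P_y g lies in U^T
   for every |y| < 1, so (b) implies (c).
   For the converse take g in U^T. Completeness of U^T makes f * g zero-free on the closed unit
   disc for every f in U. The map (f, y) |-> (f * g)(y) is jointly continuous, so by compactness
   of U the product f * g stays zero-free on a disc of radius r > 1. Hence P_r g lies in U* = V*,
   and evaluating f * P_r g at 1/r gives (f * g)(1) <> 0 for every f in V. *)

lemma holomorphic_on_Pop:
  assumes "g holomorphic_on ball 0 \<rho>" and "\<And>z. z \<in> S \<Longrightarrow> norm (y * z) < \<rho>"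
  shows "Pop y g holomorphic_on S"
proof -
  have "(g \<circ> (\<lambda>z. y * z)) holomorphic_on S"
    by (rule holomorphic_on_compose)
       (auto intro!: holomorphic_intros holomorphic_on_subset[OF assms(1)] simp: assms(2))
  then show ?thesis by (simp add: Pop_def o_def)
qed

lemma coeff_a_Pop:
  assumes "g holomorphic_on ball 0 \<rho>" and "0 < \<rho>"
  shows "coeff_a k (Pop y g) = y ^ k * coeff_a k g"
proof -
  have "open {w. norm (y * w) < \<rho>}"
    by (intro open_Collect_less continuous_intros)
  then have "(deriv ^^ k) (\<lambda>w. g (y * w)) 0 = y ^ k * (deriv ^^ k) g (y * 0)"
    by (rule higher_deriv_compose_linear[OF assms(1)]) (auto simp: assms(2))
  then show ?thesis by (simp add: coeff_a_def Pop_def)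
qed

lemma hadamard_Pop:
  assumes "g holomorphic_on ball 0 \<rho>" and "0 < \<rho>"
  shows "hadamard f (Pop y g) z = hadamard f g (y * z)"
  unfolding hadamard_def coeff_a_Pop[OF assms] by (simp add: power_mult_distrib mult_ac)

lemma hadamard_commute: "hadamard f g = hadamard g f"
  unfolding hadamard_def by (simp add: mult_ac)

lemma Pop_in_calA0_cl:
  assumes "g \<in> calA0" and "norm y < 1"
  shows "Pop y g \<in> calA0_cl"
proof -
  define R where "R = 2 / (1 + norm y)"
  have "0 < 1 + norm y" by (simp add: add_pos_nonneg)
  then have "1 < R" and "norm y * R < 1" using assms(2) by (simp_all add: R_def field_simps)
  then have "norm (y * z) < 1" if "z \<in> ball 0 R" for z
    using that mult_left_mono[of "norm z" R "norm y"] by (simp add: norm_mult)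
  then have "Pop y g holomorphic_on ball 0 R"
    using assms(1) by (intro holomorphic_on_Pop[of g 1]) (auto simp: calA0_def calA_def)
  with \<open>1 < R\<close> assms(1) show ?thesis
    by (auto simp: calA0_cl_def calA_cl_def calA0_def Pop_def)
qed

lemma dual_conv_dualT: "dual U = {g \<in> calA0. \<forall>y\<in>ball 0 1. Pop y g \<in> dualT U}"
proof -
  have "hadamard f (Pop y g) 1 = hadamard f g y" if "g \<in> calA0" for f g y
    using that hadamard_Pop[of g 1 f y 1] by (simp add: calA0_def calA_def)
  then show ?thesis
    by (auto simp: dual_def dualT_def Pop_in_calA0_cl)
qed

lemma subset_dual_dual: "X \<subseteq> calA0 \<Longrightarrow> X \<subseteq> dual (dual X)"
  by (auto simp: dual_def hadamard_commute)

lemma dual_antimono: "X \<subseteq> Y \<Longrightarrow> dual Y \<subseteq> dual X"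
  by (auto simp: dual_def)

lemma dual_dual_dual: "X \<subseteq> calA0 \<Longrightarrow> dual (dual (dual X)) = dual X"
proof
  assume "X \<subseteq> calA0"
  then show "dual (dual (dual X)) \<subseteq> dual X" by (intro dual_antimono subset_dual_dual)
  show "dual X \<subseteq> dual (dual (dual X))" by (rule subset_dual_dual) (auto simp: dual_def)
qed

lemma norm_coeff_a_le:
  assumes f: "f holomorphic_on ball 0 R" and s: "0 < s" "s < R"
    and B: "\<And>z. norm z = s \<Longrightarrow> norm (f z) \<le> B"
  shows "norm (coeff_a k f) \<le> B / s ^ k"
proof -
  have "f holomorphic_on ball 0 s" using s by (intro holomorphic_on_subset[OF f]) auto
  moreover have "continuous_on (cball 0 s) f"
    using s by (intro continuous_on_subset[OF holomorphic_on_imp_continuous_on[OF f]]) auto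
  ultimately have "norm ((deriv ^^ k) f 0) \<le> fact k * B / s ^ k"
    using B by (intro Cauchy_inequality[OF _ _ s(1)]) auto
  then show ?thesis by (simp add: coeff_a_def norm_divide field_simps)
qed

lemma holomorphic_bounded_on_sphere:
  assumes "f holomorphic_on ball 0 R" and "s < R"
  obtains B where "\<And>z. norm z = s \<Longrightarrow> norm (f z) \<le> B"
proof -
  have "continuous_on (sphere 0 s) f"
    using assms by (intro continuous_on_subset[OF holomorphic_on_imp_continuous_on]) auto
  then have "bounded (f ` sphere 0 s)" by (intro compact_imp_bounded compact_continuous_image) auto
  then show ?thesis using that by (force simp: bounded_iff)
qed

(* For |w| <= t < R the Cauchy inequalities on circles of radii s < 1 and rho < R dominate the
   terms of the Hadamard series by a geometric series of ratio t / (s rho) < 1. *)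
lemma hadamard_series_estimate:
  assumes g: "g holomorphic_on ball 0 R" and t: "0 \<le> t" "t < R"
  obtains s C where "0 < s" "s < 1" "0 \<le> C"
    and "\<And>h w. h holomorphic_on ball 0 1 \<Longrightarrow> norm w \<le> t \<Longrightarrow>
           summable (\<lambda>k. norm (coeff_a k h * coeff_a k g * w ^ k))"
    and "\<And>h B w. h holomorphic_on ball 0 1 \<Longrightarrow> (\<forall>z\<in>sphere 0 s. norm (h z) \<le> B) \<Longrightarrow>
           norm w \<le> t \<Longrightarrow> norm (hadamard h g w) \<le> B * C"
proof -
  define \<rho> where "\<rho> = (t + R) / 2"
  define s where "s = (1 + t / \<rho>) / 2"
  define q where "q = t / (s * \<rho>)"
  have \<rho>: "t < \<rho>" "\<rho> < R" "0 < \<rho>" using t by (auto simp: \<rho>_def)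
  have s: "0 < s" "s < 1" using t \<rho> by (auto simp: s_def field_simps)
  have "s * \<rho> = (\<rho> + t) / 2" using \<rho> by (simp add: s_def field_simps)
  then have q: "0 \<le> q" "q < 1" using t \<rho> by (auto simp: q_def)
  obtain Bg where Bg: "\<And>z. norm z = \<rho> \<Longrightarrow> norm (g z) \<le> Bg"
    using holomorphic_bounded_on_sphere[OF g \<rho>(2)] by blast
  have "0 \<le> Bg" using Bg[of "of_real \<rho>"] \<rho>(3) by (simp add: order_trans[OF norm_ge_zero])
  define C where "C = Bg / (1 - q)"
  show ?thesis
  proof (rule that[OF s, of C])
    show "0 \<le> C" using \<open>0 \<le> Bg\<close> q by (simp add: C_def)
    have dominated: "norm (coeff_a k h * coeff_a k g * w ^ k) \<le> B * Bg * q ^ k"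
      if h: "h holomorphic_on ball 0 1" and B: "\<And>z. norm z = s \<Longrightarrow> norm (h z) \<le> B"
        and w: "norm w \<le> t" for h B k and w :: complex
    proof -
      have a: "norm (coeff_a k h) \<le> B / s ^ k" by (rule norm_coeff_a_le[OF h s B])
      have b: "norm (coeff_a k g) \<le> Bg / \<rho> ^ k" by (rule norm_coeff_a_le[OF g \<rho>(3,2) Bg])
      have "norm (coeff_a k h * coeff_a k g * w ^ k) \<le> (B / s ^ k) * (Bg / \<rho> ^ k) * t ^ k"
        unfolding norm_mult norm_power
        by (intro mult_mono a b power_mono w order_trans[OF norm_ge_zero a] mult_nonneg_nonneg
            order_trans[OF norm_ge_zero b]) auto
      also have "\<dots> = B * Bg * q ^ k" by (simp add: q_def power_divide power_mult_distrib)
      finally show ?thesis .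
    qed
    have geom: "summable (\<lambda>k. B * Bg * q ^ k)" for B
      using q by (intro summable_mult summable_geometric) auto
    show "summable (\<lambda>k. norm (coeff_a k h * coeff_a k g * w ^ k))"
      if h: "h holomorphic_on ball 0 1" and w: "norm w \<le> t" for h and w :: complex
    proof -
      obtain B where B: "\<And>z. norm z = s \<Longrightarrow> norm (h z) \<le> B"
        using holomorphic_bounded_on_sphere[OF h s(2)] by blast
      show ?thesis
        by (rule summable_comparison_test[OF _ geom]) (use dominated[OF h B w] in auto)
    qed
    show "norm (hadamard h g w) \<le> B * C"
      if h: "h holomorphic_on ball 0 1" and B: "\<forall>z\<in>sphere 0 s. norm (h z) \<le> B"
        and w: "norm w \<le> t" for h B and w :: complex
    proof -
      from B have B: "\<And>z. norm z = s \<Longrightarrow> norm (h z) \<le> B" by simp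
      have "norm (hadamard h g w) \<le> (\<Sum>k. B * Bg * q ^ k)"
        unfolding hadamard_def by (rule norm_suminf_le[OF dominated[OF h B w] geom])
      also have "\<dots> = B * C" using q by (simp add: suminf_mult suminf_geometric C_def)
      finally show ?thesis .
    qed
  qed
qed

lemma coeff_a_diff:
  assumes "a holomorphic_on ball 0 1" and "b holomorphic_on ball 0 1"
  shows "coeff_a k (\<lambda>z. a z - b z) = coeff_a k a - coeff_a k b"
  using higher_deriv_diff[OF assms, of 0 k] by (simp add: coeff_a_def diff_divide_distrib)

lemma hadamard_diff:
  assumes "a holomorphic_on ball 0 1" and "b holomorphic_on ball 0 1"
    and "summable (\<lambda>k. norm (coeff_a k a * coeff_a k g * w ^ k))"
    and "summable (\<lambda>k. norm (coeff_a k b * coeff_a k g * w ^ k))"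
  shows "hadamard (\<lambda>z. a z - b z) g w = hadamard a g w - hadamard b g w"
  using suminf_diff[OF summable_norm_cancel[OF assms(3)] summable_norm_cancel[OF assms(4)]]
  by (simp add: hadamard_def coeff_a_diff[OF assms(1,2)] algebra_simps)

lemma isCont_hadamard:
  assumes f: "f holomorphic_on ball 0 1" and g: "g holomorphic_on ball 0 R" and y: "norm y < R"
  shows "isCont (hadamard f g) y"
proof -
  obtain t where t: "norm y < t" "t < R" using dense[OF y] by blast
  have "0 \<le> t" using t(1) norm_ge_zero[of y] by linarith
  obtain s C where "0 < s" "s < 1" "0 \<le> C"
    and sum: "\<And>h w. h holomorphic_on ball 0 1 \<Longrightarrow> norm w \<le> t \<Longrightarrow>
      summable (\<lambda>k. norm (coeff_a k h * coeff_a k g * w ^ k))"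
    and "\<And>h B w. h holomorphic_on ball 0 1 \<Longrightarrow> (\<forall>z\<in>sphere 0 s. norm (h z) \<le> B) \<Longrightarrow>
      norm w \<le> t \<Longrightarrow> norm (hadamard h g w) \<le> B * C"
    by (rule hadamard_series_estimate[OF g \<open>0 \<le> t\<close> t(2)]) (rule that)
  have "summable (\<lambda>k. norm (coeff_a k f * coeff_a k g * of_real t ^ k))"
    by (rule sum[OF f]) (simp add: \<open>0 \<le> t\<close>)
  then have "isCont (\<lambda>w. \<Sum>k. coeff_a k f * coeff_a k g * w ^ k) y"
    by (rule isCont_powser[OF summable_norm_cancel]) (use t(1) \<open>0 \<le> t\<close> in simp)
  then show ?thesis by (simp add: hadamard_def)
qed

lemma lu_converges_subseq:
  "lu_converges F f \<Longrightarrow> strict_mono r \<Longrightarrow> lu_converges (F \<circ> r) f"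
  unfolding lu_converges_def o_def by (blast intro: filterlim_compose[OF _ filterlim_subseq])

lemma tendsto_hadamard_diff:
  assumes F: "\<And>n. F n holomorphic_on ball 0 1" and f: "f holomorphic_on ball 0 1"
    and conv: "lu_converges F f" and g: "g holomorphic_on ball 0 R"
    and t: "0 \<le> t" "t < R" and Yt: "\<forall>\<^sub>F n in sequentially. norm (Y n) \<le> t"
  shows "(\<lambda>n. hadamard (F n) g (Y n) - hadamard f g (Y n)) \<longlonglongrightarrow> 0"
proof (rule tendstoI)
  fix e :: real assume "0 < e"
  obtain s C where s: "0 < s" "s < 1" "0 \<le> C"
    and sum: "\<And>h w. h holomorphic_on ball 0 1 \<Longrightarrow> norm w \<le> t \<Longrightarrow>
      summable (\<lambda>k. norm (coeff_a k h * coeff_a k g * w ^ k))"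
    and bound: "\<And>h B w. h holomorphic_on ball 0 1 \<Longrightarrow> (\<forall>z\<in>sphere 0 s. norm (h z) \<le> B) \<Longrightarrow>
      norm w \<le> t \<Longrightarrow> norm (hadamard h g w) \<le> B * C"
    by (rule hadamard_series_estimate[OF g t]) (rule that)
  define e' where "e' = e / (C + 1)"
  have "0 < e'" and "e' * C < e" using \<open>0 < e\<close> s(3) by (simp_all add: e'_def field_simps)
  have "sphere 0 s \<subseteq> ball 0 1" using s(2) by auto
  then have "uniform_limit (sphere 0 s) F f sequentially"
    using conv compact_sphere unfolding lu_converges_def by blast
  then have "\<forall>\<^sub>F n in sequentially. \<forall>z\<in>sphere 0 s. dist (F n z) (f z) < e'"
    using \<open>0 < e'\<close> by (rule uniform_limitD)
  with Yt show "\<forall>\<^sub>F n in sequentially. dist (hadamard (F n) g (Y n) - hadamard f g (Y n)) 0 < e"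
  proof eventually_elim
    case (elim n)
    have "hadamard (F n) g (Y n) - hadamard f g (Y n) = hadamard (\<lambda>z. F n z - f z) g (Y n)"
      using hadamard_diff[OF F f sum[OF F elim(1)] sum[OF f elim(1)]] by simp
    also have "norm \<dots> \<le> e' * C"
      using elim by (intro bound holomorphic_on_diff F f) (auto simp: dist_norm less_imp_le)
    finally show ?case using \<open>e' * C < e\<close> by simp
  qed
qed

lemma tendsto_hadamard:
  assumes F: "\<And>n. F n holomorphic_on ball 0 1" and f: "f holomorphic_on ball 0 1"
    and conv: "lu_converges F f" and g: "g holomorphic_on ball 0 R"
    and Y: "Y \<longlonglongrightarrow> y" and y: "norm y < R"
  shows "(\<lambda>n. hadamard (F n) g (Y n)) \<longlonglongrightarrow> hadamard f g y"
proof -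
  obtain t where t: "norm y < t" "t < R" using dense[OF y] by blast
  have "0 \<le> t" using t(1) norm_ge_zero[of y] by linarith
  have "\<forall>\<^sub>F n in sequentially. dist (Y n) y < t - norm y"
    using tendstoD[OF Y] t(1) by simp
  then have "\<forall>\<^sub>F n in sequentially. norm (Y n) \<le> t"
  proof (rule eventually_mono)
    fix n assume "dist (Y n) y < t - norm y"
    then show "norm (Y n) \<le> t" using norm_triangle_ineq2[of "Y n" y] by (simp add: dist_norm)
  qed
  then have "(\<lambda>n. hadamard (F n) g (Y n) - hadamard f g (Y n)) \<longlonglongrightarrow> 0"
    by (rule tendsto_hadamard_diff[OF F f conv g \<open>0 \<le> t\<close> t(2)])
  moreover have "(\<lambda>n. hadamard f g (Y n)) \<longlonglongrightarrow> hadamard f g y"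
    by (rule isCont_tendsto_compose[OF isCont_hadamard[OF f g y] Y])
  ultimately show ?thesis using tendsto_add by fastforce
qed

lemma hadamard_zeros_limit:
  assumes U: "U \<subseteq> calA0" "lu_compact U" and g: "g holomorphic_on ball 0 R"
    and F: "\<And>n. F n \<in> U" and zero: "\<And>n. hadamard (F n) g (Y n) = 0"
    and Y: "\<And>n. norm (Y n) \<le> r n" and r: "r \<longlonglongrightarrow> \<rho>" and "\<rho> < R"
  shows "\<exists>f\<in>U. \<exists>y. norm y \<le> \<rho> \<and> hadamard f g y = 0"
proof -
  obtain M where M: "\<And>n. norm (r n) \<le> M"
    using convergent_imp_Bseq[OF convergentI[OF r]] by (auto simp: Bseq_def)
  have "norm (Y n) \<le> M" for n using Y[of n] M[of n] abs_ge_self[of "r n"] by simp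
  obtain \<sigma>1 f where \<sigma>1: "strict_mono \<sigma>1" and "f \<in> U" and conv1: "lu_converges (F \<circ> \<sigma>1) f"
    using U(2) F unfolding lu_compact_def by blast
  have "\<forall>n. (Y \<circ> \<sigma>1) n \<in> cball 0 M" using \<open>\<And>n. norm (Y n) \<le> M\<close> by simp
  then obtain \<sigma>2 y where \<sigma>2: "strict_mono \<sigma>2" and Ylim: "(Y \<circ> \<sigma>1 \<circ> \<sigma>2) \<longlonglongrightarrow> y"
    using compact_imp_seq_compact[OF compact_cball] unfolding seq_compact_def by metis
  define \<sigma> where "\<sigma> = \<sigma>1 \<circ> \<sigma>2"
  have Y\<sigma>: "(Y \<circ> \<sigma>) \<longlonglongrightarrow> y" using Ylim by (simp add: \<sigma>_def o_assoc)
  have "norm y \<le> \<rho>"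
  proof (rule LIMSEQ_le)
    show "(\<lambda>n. norm ((Y \<circ> \<sigma>) n)) \<longlonglongrightarrow> norm y" using Y\<sigma> by (rule tendsto_norm)
    show "(r \<circ> \<sigma>) \<longlonglongrightarrow> \<rho>" using r \<sigma>1 \<sigma>2 by (simp add: LIMSEQ_subseq_LIMSEQ \<sigma>_def strict_mono_o)
    show "\<exists>N. \<forall>n\<ge>N. norm ((Y \<circ> \<sigma>) n) \<le> (r \<circ> \<sigma>) n" using Y by simp
  qed
  have "(\<lambda>n. hadamard ((F \<circ> \<sigma>) n) g ((Y \<circ> \<sigma>) n)) \<longlonglongrightarrow> hadamard f g y"
  proof (rule tendsto_hadamard[OF _ _ _ g Y\<sigma>])
    show "(F \<circ> \<sigma>) n holomorphic_on ball 0 1" for n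
      using F U(1) by (simp add: calA0_def calA_def subset_iff)
    show "f holomorphic_on ball 0 1" using \<open>f \<in> U\<close> U(1) by (auto simp: calA0_def calA_def)
    show "lu_converges (F \<circ> \<sigma>) f" using lu_converges_subseq[OF conv1 \<sigma>2] by (simp add: \<sigma>_def o_assoc)
    show "norm y < R" using \<open>norm y \<le> \<rho>\<close> \<open>\<rho> < R\<close> by simp
  qed
  then have "hadamard f g y = 0" using zero by (simp add: LIMSEQ_const_iff)
  with \<open>f \<in> U\<close> \<open>norm y \<le> \<rho>\<close> show ?thesis by blast
qed

lemma hadamard_nonzero_on_larger_disc:
  assumes U: "U \<subseteq> calA0" "lu_compact U" and g: "g holomorphic_on ball 0 R" and "1 < R"
    and nz: "\<forall>f\<in>U. \<forall>y\<in>cball 0 1. hadamard f g y \<noteq> 0"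
  shows "\<exists>r>1. r < R \<and> (\<forall>f\<in>U. \<forall>y\<in>ball 0 r. hadamard f g y \<noteq> 0)"
proof (rule ccontr)
  assume contra: "\<not> ?thesis"
  define c where "c = (R - 1) / 2"
  define r where "r n = 1 + c * inverse (real (Suc n))" for n
  have "0 < c" "1 + c < R" using \<open>1 < R\<close> by (simp_all add: c_def field_simps)
  have r: "1 < r n" "r n < R" for n
  proof -
    have "0 < c * inverse (real (Suc n))" using \<open>0 < c\<close> by simp
    moreover have "c * inverse (real (Suc n)) \<le> c"
      using \<open>0 < c\<close> by (intro mult_left_le) (auto simp: field_simps)
    ultimately show "1 < r n" "r n < R" using \<open>1 + c < R\<close> unfolding r_def by linarith+
  qed
  have "\<exists>f\<in>U. \<exists>y\<in>ball 0 (r n). hadamard f g y = 0" for n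
    using contra r[of n] by force
  then obtain F Y where F: "\<And>n. F n \<in> U" and Y: "\<And>n. norm (Y n) \<le> r n"
    and zero: "\<And>n. hadamard (F n) g (Y n) = 0"
    by (metis mem_ball_0 less_imp_le)
  have "r \<longlonglongrightarrow> 1 + c * 0"
    unfolding r_def by (intro tendsto_intros LIMSEQ_inverse_real_of_nat)
  then have "\<exists>f\<in>U. \<exists>y. norm y \<le> 1 \<and> hadamard f g y = 0"
    using hadamard_zeros_limit[OF U g F zero Y] \<open>1 < R\<close> by simp
  with nz show False by auto
qed

lemma hadamard_nonzero_if_dualT_complete:
  assumes "complete_set (dualT U)" and g: "g \<in> dualT U" and "f \<in> U" and y: "y \<in> cball 0 1"
  shows "hadamard f g y \<noteq> 0"
proof -
  obtain R where "1 < R" "g holomorphic_on ball 0 R"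
    using g by (auto simp: dualT_def calA0_cl_def calA_cl_def)
  moreover have "Pop y g \<in> dualT U" using assms(1) g y unfolding complete_set_def by blast
  ultimately show ?thesis
    using \<open>f \<in> U\<close> hadamard_Pop[of g R f y 1] by (auto simp: dualT_def)
qed

lemma dualT_subset_if_dual_subset:
  assumes U: "U \<subseteq> calA0" "lu_compact U" "complete_set (dualT U)" and sub: "dual U \<subseteq> dual V"
  shows "dualT U \<subseteq> dualT V"
proof
  fix g assume g: "g \<in> dualT U"
  obtain R where R: "1 < R" "g holomorphic_on ball 0 R" and "g 0 = 1"
    using g by (auto simp: dualT_def calA0_cl_def calA_cl_def)
  obtain r where r: "1 < r" "r < R" and nz: "\<forall>f\<in>U. \<forall>y\<in>ball 0 r. hadamard f g y \<noteq> 0"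
    using hadamard_nonzero_on_larger_disc[OF U(1,2) R(2,1)]
      hadamard_nonzero_if_dualT_complete[OF U(3) g] by blast
  define h where "h = Pop (of_real r) g"
  have scaled: "norm (of_real r * z) < r" if "norm z < 1" for z :: complex
    using r(1) that by (simp add: norm_mult)
  have had: "hadamard f h z = hadamard f g (of_real r * z)" for f z
    unfolding h_def using R by (intro hadamard_Pop) auto
  have "h holomorphic_on ball 0 1"
    unfolding h_def using scaled r(2) by (intro holomorphic_on_Pop[OF R(2)]) force
  moreover have "h 0 = 1" using \<open>g 0 = 1\<close> by (simp add: h_def Pop_def)
  ultimately have "h \<in> dual U"
    using nz scaled by (auto simp: dual_def calA0_def calA_def had)
  with sub have "h \<in> dual V" by blast
  have "of_real (inverse r) \<in> ball (0::complex) 1" using r(1) by (simp add: norm_inverse inverse_less_1_iff)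
  have "hadamard f g 1 \<noteq> 0" if "f \<in> V" for f
  proof -
    have "hadamard f h (of_real (inverse r)) \<noteq> 0"
      using \<open>h \<in> dual V\<close> that \<open>of_real (inverse r) \<in> ball 0 1\<close> by (auto simp: dual_def)
    moreover have "of_real r * of_real (inverse r) = (1::complex)"
      using r(1) by (simp flip: of_real_mult)
    ultimately show ?thesis by (simp add: had)
  qed
  with g show "g \<in> dualT V" by (simp add: dualT_def)
qed

theorem corollary2:
  assumes "U \<subseteq> calA0" and "V \<subseteq> calA0"
    and "lu_compact U" and "lu_compact V"
    and "complete_set (dualT U)" and "complete_set (dualT V)"
  shows "(dual (dual U) = dual (dual V) \<longleftrightarrow> dualT U = dualT V)
       \<and> (dualT U = dualT V \<longleftrightarrow> dual U = dual V)"
proof -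
  have "dual (dual U) = dual (dual V) \<longleftrightarrow> dual U = dual V"
    using dual_dual_dual[OF assms(1)] dual_dual_dual[OF assms(2)] by metis
  moreover have "dualT U = dualT V \<longleftrightarrow> dual U = dual V"
  proof
    show "dualT U = dualT V \<Longrightarrow> dual U = dual V" by (simp add: dual_conv_dualT)
    show "dual U = dual V \<Longrightarrow> dualT U = dualT V"
      using dualT_subset_if_dual_subset[OF assms(1,3,5)] dualT_subset_if_dual_subset[OF assms(2,4,6)]
      by blast
  qed
  ultimately show ?thesis by blast
qed

end
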